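(* Let $P$ be a Poisson tensor on $\mathbb{R}^3$, let $H\in C^\infty(\mathbb{R}^3)$, let $S\in C^\infty(\mathbb{R}^3)$ satisfy $PdS=0$, and let $g$ be the symmetric tensor with components $g^{ij}=H^iH^j-\delta^{ij}\sum_k H^kH^k$. If $x$ is a regular point of $P$ (i.e. $P(x)\neq 0$) with $d_xS\neq 0$, then $g\,d_xS=0$ if and only if $P\,d_xH=0$.
   Context: $\mathbb{R}^3$ carries the standard Euclidean metric, used to identify tangent and cotangent spaces with $\mathbb{R}^3$; $H^i=H_i=\partial H/\partial x^i$. A Poisson tensor is a skew-symmetric bivector field satisfying the Jacobi identity. *)

theory Defs
  imports "HOL-Analysis.Analysis"
begin

definition partial :: "3 \<Rightarrow> (real^3 \<Rightarrow> real) \<Rightarrow> real^3 \<Rightarrow> real" where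
  "partial i f x = frechet_derivative f (at x) (axis i 1)"

fun iter_partial :: "3 list \<Rightarrow> (real^3 \<Rightarrow> real) \<Rightarrow> real^3 \<Rightarrow> real" where
  "iter_partial [] f = f"
| "iter_partial (i # is) f = partial i (iter_partial is f)"

definition smooth :: "(real^3 \<Rightarrow> real) \<Rightarrow> bool" where
  "smooth f \<longleftrightarrow> (\<forall>is x. iter_partial is f differentiable (at x))"

text \<open>Differential (gradient, via the Euclidean metric): components H^i = dH/dx^i.\<close>
definition grad :: "(real^3 \<Rightarrow> real) \<Rightarrow> real^3 \<Rightarrow> real^3" where
  "grad f x = (\<chi> i. partial i f x)"

definition poisson_tensor :: "(real^3 \<Rightarrow> real^3^3) \<Rightarrow> bool" where
  "poisson_tensor P \<longleftrightarrow>
     (\<forall>i j. smooth (\<lambda>y. P y $ i $ j)) \<and>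
     (\<forall>i j y. P y $ i $ j = - (P y $ j $ i)) \<and>
     (\<forall>i j k y. (\<Sum>l\<in>UNIV.
          P y $ i $ l * partial l (\<lambda>z. P z $ j $ k) y
        + P y $ j $ l * partial l (\<lambda>z. P z $ k $ i) y
        + P y $ k $ l * partial l (\<lambda>z. P z $ i $ j) y) = 0)"

definition gtensor :: "(real^3 \<Rightarrow> real) \<Rightarrow> real^3 \<Rightarrow> real^3^3" where
  "gtensor H x = (\<chi> i j. grad H x $ i * grad H x $ j
      - (if i = j then 1 else 0) * (\<Sum>k\<in>UNIV. grad H x $ k * grad H x $ k))"

end

theory Submission
  imports Defs "HOL-Analysis.Cross3"
begin

unbundle cross3_syntax

text \<open>A skew-symmetric 3x3 matrix acts as \<open>v \<mapsto> \<omega> \<times> v\<close> for its axial vector \<open>\<omega>\<close>,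
  and by the triple product expansion \<open>g v = h \<times> (h \<times> v)\<close> with \<open>h = d\<^sub>xH\<close>.
  Hence both sides of the equivalence say that \<open>d\<^sub>xH\<close> is parallel to \<open>\<omega>\<close>, which is a
  nonzero multiple of \<open>d\<^sub>xS\<close> because \<open>P d\<^sub>xS = 0\<close>. Only the skew-symmetry of \<open>P(x)\<close>
  is used.\<close>

definition axial_vector :: "real^3^3 \<Rightarrow> real^3" where
  "axial_vector M = vector [M$3$2, M$1$3, M$2$1]"

lemma skew_matrix_vector_mult_eq_cross:
  assumes "\<And>i j. M$i$j = - M$j$i"
  shows "M *v v = axial_vector M \<times> v"
proof -
  have "M$1$1 = 0" "M$2$2 = 0" "M$3$3 = 0"
    using assms[of 1 1] assms[of 2 2] assms[of 3 3] by simp_all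
  moreover have "M$1$2 = - M$2$1" "M$2$3 = - M$3$2" "M$3$1 = - M$1$3"
    using assms by blast+
  ultimately show ?thesis
    by (simp add: axial_vector_def cross3_def vector_def vec_eq_iff matrix_vector_mult_def sum_3 forall_3)
qed

lemma skew_matrix_eq_0_iff_axial_vector:
  assumes "\<And>i j. M$i$j = - M$j$i"
  shows "M = 0 \<longleftrightarrow> axial_vector M = 0"
proof
  assume "axial_vector M = 0"
  then have "M *v v = 0" for v
    using skew_matrix_vector_mult_eq_cross[OF assms] by simp
  then show "M = 0"
    by (metis matrix_eq matrix_vector_mult_0)
qed (simp add: axial_vector_def vec_eq_iff forall_3)

lemma cross_cross_eq_0_iff: "h \<times> (h \<times> v) = 0 \<longleftrightarrow> h \<times> v = 0"
  by (metis cross_zero_right dot_cross_self(1) norm_and_cross_eq_0)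

lemma cross_eq_0_iff_of_parallel:
  assumes "w \<times> s = 0" "w \<noteq> 0" "s \<noteq> 0"
  shows "w \<times> h = 0 \<longleftrightarrow> h \<times> s = 0"
proof -
  obtain c where "s = c *\<^sub>R w"
    using assms by (auto simp: cross_eq_0 collinear_lemma)
  moreover have "c \<noteq> 0"
    using \<open>s = c *\<^sub>R w\<close> \<open>s \<noteq> 0\<close> by auto
  ultimately show ?thesis
    by (metis cross_mult_right cross_skew neg_equal_0_iff_equal scale_eq_0_iff)
qed

lemma gtensor_mult_eq_cross_cross: "gtensor H x *v v = grad H x \<times> (grad H x \<times> v)"
  by (simp add: gtensor_def grad_def cross3_def vector_def vec_eq_iff matrix_vector_mult_def sum_3 forall_3
      algebra_simps)

theorem mainTheorem7:
  fixes P :: "real^3 \<Rightarrow> real^3^3" and H S :: "real^3 \<Rightarrow> real" and x :: "real^3"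
  assumes "poisson_tensor P"
    and "smooth H"
    and "smooth S"
    and "\<forall>y. P y *v grad S y = 0"
    and "P x \<noteq> 0"
    and "grad S x \<noteq> 0"
  shows "gtensor H x *v grad S x = 0 \<longleftrightarrow> P x *v grad H x = 0"
proof -
  define \<omega> where "\<omega> = axial_vector (P x)"
  have skew: "\<And>i j. P x $i$j = - P x $j$i"
    using assms(1) unfolding poisson_tensor_def by blast
  have mult_eq_cross: "P x *v v = \<omega> \<times> v" for v
    unfolding \<omega>_def by (rule skew_matrix_vector_mult_eq_cross[OF skew])
  have "\<omega> \<times> grad S x = 0"
    using assms(4) mult_eq_cross by metis
  moreover have "\<omega> \<noteq> 0"
    using assms(5) skew_matrix_eq_0_iff_axial_vector[OF skew] by (simp add: \<omega>_def)
  ultimately have "\<omega> \<times> grad H x = 0 \<longleftrightarrow> grad H x \<times> grad S x = 0"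
    using assms(6) by (rule cross_eq_0_iff_of_parallel)
  then show ?thesis
    by (simp only: gtensor_mult_eq_cross_cross cross_cross_eq_0_iff mult_eq_cross)
qed

end
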